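(* Let $\psi\in\mathrm{Sp}_0(V,\omega)$ be fixed. For every $\Phi\in\mathrm{Sp}_\psi(V,\omega)$ the linear operator \[ \mathcal C_\psi(\Phi)=J(\psi-\mathrm{Id})(\Phi-\psi)^{-1}(\Phi-\mathrm{Id}):V\to V \] is symmetric with respect to $\langle\cdot,\cdot\rangle$, and $\mathrm{Ker}\big(\mathcal C_\psi(\Phi)\big)=\mathrm{Ker}(\Phi-\mathrm{Id})$.
   Context: Let $(V,\omega)$ be a real symplectic vector space of finite dimension and $\mathrm{Sp}(V,\omega)$ its symplectic group. Fix a linear map $J:V\to V$ with $J^2=-\mathrm{Id}$ and a positive definite inner product $\langle\cdot,\cdot\rangle$ on $V$ such that $\omega(u,v)=\langle Ju,v\rangle$ for all $u,v\in V$. For $\psi\in\mathrm{Sp}(V,\omega)$, $\mathrm{Sp}_\psi(V,\omega)$ denotes the set of $\Phi\in\mathrm{Sp}(V,\omega)$ such that $\Phi-\psi$ is invertible, and $\mathrm{Sp}_0(V,\omega)=\mathrm{Sp}_{\mathrm{Id}}(V,\omega)$. *)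

theory Defs
  imports "HOL-Analysis.Analysis"
begin

definition symplectic_form :: "('a::real_vector \<Rightarrow> 'a \<Rightarrow> real) \<Rightarrow> bool" where
  "symplectic_form \<omega> \<longleftrightarrow> bilinear \<omega> \<and> (\<forall>u v. \<omega> u v = - \<omega> v u) \<and>
     (\<forall>u. (\<forall>v. \<omega> u v = 0) \<longrightarrow> u = 0)"

definition Sp :: "('a::real_vector \<Rightarrow> 'a \<Rightarrow> real) \<Rightarrow> ('a \<Rightarrow> 'a) set" where
  "Sp \<omega> = {\<Phi>. linear \<Phi> \<and> bij \<Phi> \<and> (\<forall>u v. \<omega> (\<Phi> u) (\<Phi> v) = \<omega> u v)}"

definition Sp_psi :: "('a::real_vector \<Rightarrow> 'a \<Rightarrow> real) \<Rightarrow> ('a \<Rightarrow> 'a) \<Rightarrow> ('a \<Rightarrow> 'a) set" where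
  "Sp_psi \<omega> \<psi> = {\<Phi> \<in> Sp \<omega>. bij (\<lambda>x. \<Phi> x - \<psi> x)}"

abbreviation Sp0 :: "('a::real_vector \<Rightarrow> 'a \<Rightarrow> real) \<Rightarrow> ('a \<Rightarrow> 'a) set" where
  "Sp0 \<omega> \<equiv> Sp_psi \<omega> id"

definition C_psi :: "('a::real_vector \<Rightarrow> 'a) \<Rightarrow> ('a \<Rightarrow> 'a) \<Rightarrow> ('a \<Rightarrow> 'a) \<Rightarrow> ('a \<Rightarrow> 'a)" where
  "C_psi J \<psi> \<Phi> = J \<circ> (\<lambda>x. \<psi> x - x) \<circ> inv (\<lambda>x. \<Phi> x - \<psi> x) \<circ> (\<lambda>x. \<Phi> x - x)"

end

theory Submission
  imports Defs
begin

text \<open>Write \<open>A = \<Phi> - \<psi>\<close> and, for given \<open>u\<close>, let \<open>x = A\<^sup>-\<^sup>1 (\<Phi> u - u)\<close>, so that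
  \<open>\<C>\<^sub>\<psi>(\<Phi>) u = J (\<psi> x - x)\<close>. The defining equation of \<open>x\<close> says exactly \<open>\<Phi> (x - u) = \<psi> x - u\<close>.
  Comparing \<open>\<omega>(\<Phi>(x - u), \<Phi>(y - v)) = \<omega>(x - u, y - v)\<close> with \<open>\<omega>(\<psi> x, \<psi> y) = \<omega>(x, y)\<close>
  leaves \<open>\<omega>(\<psi> x - x, v) = \<omega>(\<psi> y - y, u)\<close>, which is the symmetry of \<open>\<C>\<^sub>\<psi>(\<Phi>)\<close> because
  \<open>\<omega>(a, b) = \<langle>J a, b\<rangle>\<close>. The kernel statement holds because \<open>J\<close>, \<open>\<psi> - Id\<close> and \<open>A\<^sup>-\<^sup>1\<close> are
  injective linear maps.\<close>

lemma preserved_skew_form_swap: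
  fixes \<omega> :: "'a::real_vector \<Rightarrow> 'a \<Rightarrow> real"
  assumes \<omega>: "bilinear \<omega>" and skew: "\<And>a b. \<omega> a b = - \<omega> b a"
    and "linear \<Phi>" and \<Phi>_pres: "\<And>a b. \<omega> (\<Phi> a) (\<Phi> b) = \<omega> a b"
    and \<psi>_pres: "\<And>a b. \<omega> (\<psi> a) (\<psi> b) = \<omega> a b"
    and x: "\<Phi> x - \<psi> x = \<Phi> u - u" and y: "\<Phi> y - \<psi> y = \<Phi> v - v"
  shows "\<omega> (\<psi> x - x) v = \<omega> (\<psi> y - y) u"
proof -
  have \<Phi>x: "\<Phi> (x - u) = \<psi> x - u" and \<Phi>y: "\<Phi> (y - v) = \<psi> y - v"
    using x y by (simp_all add: linear_diff[OF \<open>linear \<Phi>\<close>] algebra_simps)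
  have "\<omega> (\<psi> x - u) (\<psi> y - v) = \<omega> (x - u) (y - v)"
    using \<Phi>_pres[of "x - u" "y - v"] by (simp only: \<Phi>x \<Phi>y)
  then have "\<omega> (\<psi> x) v + \<omega> u (\<psi> y) = \<omega> x v + \<omega> u y"
    using \<psi>_pres[of x y] by (simp add: bilinear_lsub[OF \<omega>] bilinear_rsub[OF \<omega>])
  then show ?thesis
    using skew[of u "\<psi> y"] skew[of u y]
    by (simp add: bilinear_lsub[OF \<omega>] algebra_simps)
qed

lemma C_psi_apply:
  "C_psi J \<psi> \<Phi> u = J (\<psi> (inv (\<lambda>x. \<Phi> x - \<psi> x) (\<Phi> u - u)) - inv (\<lambda>x. \<Phi> x - \<psi> x) (\<Phi> u - u))"
  by (simp add: C_psi_def)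

lemma C_psi_symmetric:
  fixes \<omega> :: "'a::real_inner \<Rightarrow> 'a \<Rightarrow> real"
  assumes "symplectic_form \<omega>" and \<omega>_J: "\<And>u v. \<omega> u v = inner (J u) v"
    and "\<Phi> \<in> Sp \<omega>" and "\<psi> \<in> Sp \<omega>" and A: "bij (\<lambda>x. \<Phi> x - \<psi> x)"
  shows "inner (C_psi J \<psi> \<Phi> u) v = inner u (C_psi J \<psi> \<Phi> v)"
proof -
  define x where "x = inv (\<lambda>x. \<Phi> x - \<psi> x) (\<Phi> u - u)"
  define y where "y = inv (\<lambda>x. \<Phi> x - \<psi> x) (\<Phi> v - v)"
  have x: "\<Phi> x - \<psi> x = \<Phi> u - u" and y: "\<Phi> y - \<psi> y = \<Phi> v - v"
    using x_def y_def by (simp_all add: bij_inv_eq_iff[OF A])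
  have "bilinear \<omega>" and skew: "\<And>a b. \<omega> a b = - \<omega> b a"
    using \<open>symplectic_form \<omega>\<close> unfolding symplectic_form_def by blast+
  moreover have "linear \<Phi>" "\<And>a b. \<omega> (\<Phi> a) (\<Phi> b) = \<omega> a b"
    using \<open>\<Phi> \<in> Sp \<omega>\<close> by (auto simp: Sp_def)
  moreover have "\<And>a b. \<omega> (\<psi> a) (\<psi> b) = \<omega> a b"
    using \<open>\<psi> \<in> Sp \<omega>\<close> by (auto simp: Sp_def)
  ultimately have "\<omega> (\<psi> x - x) v = \<omega> (\<psi> y - y) u"
    using x y by (rule preserved_skew_form_swap)
  then have "inner (J (\<psi> x - x)) v = inner u (J (\<psi> y - y))"
    by (simp add: \<omega>_J inner_commute)
  then show ?thesis
    by (simp only: C_psi_apply flip: x_def y_def)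
qed

lemma linear_inj_eq_0_iff: "linear f \<Longrightarrow> inj f \<Longrightarrow> f x = 0 \<longleftrightarrow> x = 0"
  using linear_injective_0 linear_0 by metis

lemma C_psi_eq_0_iff:
  assumes "linear J" "inj J" "linear \<psi>" "inj (\<lambda>x. \<psi> x - x)"
    and "linear \<Phi>" and A: "bij (\<lambda>x. \<Phi> x - \<psi> x)"
  shows "C_psi J \<psi> \<Phi> v = 0 \<longleftrightarrow> \<Phi> v - v = 0"
proof -
  have "linear (\<lambda>x. \<psi> x - x)"
    using \<open>linear \<psi>\<close> linear_ident by (rule linear_compose_sub)
  then have \<psi>_minus_id_eq_0: "\<psi> x - x = 0 \<longleftrightarrow> x = 0" for x
    using \<open>inj (\<lambda>x. \<psi> x - x)\<close> by (rule linear_inj_eq_0_iff)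
  have inv_A_eq_0: "inv (\<lambda>x. \<Phi> x - \<psi> x) z = 0 \<longleftrightarrow> z = 0" for z
    using bij_inv_eq_iff[OF A, of 0 z] linear_0[OF \<open>linear \<Phi>\<close>] linear_0[OF \<open>linear \<psi>\<close>] by auto
  show ?thesis
    by (simp only: C_psi_apply linear_inj_eq_0_iff[OF \<open>linear J\<close> \<open>inj J\<close>]
        \<psi>_minus_id_eq_0 inv_A_eq_0)
qed

theorem lemma2p6:
  fixes \<omega> :: "'a::euclidean_space \<Rightarrow> 'a \<Rightarrow> real"
    and J \<psi> \<Phi> :: "'a \<Rightarrow> 'a"
  assumes "symplectic_form \<omega>"
    and "linear J" and "\<And>x. J (J x) = - x"
    and "\<And>u v. \<omega> u v = inner (J u) v"
    and "\<psi> \<in> Sp0 \<omega>"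
    and "\<Phi> \<in> Sp_psi \<omega> \<psi>"
  shows "(\<forall>u v. inner (C_psi J \<psi> \<Phi> u) v = inner u (C_psi J \<psi> \<Phi> v))
    \<and> {v. C_psi J \<psi> \<Phi> v = 0} = {v. \<Phi> v - v = 0}"
proof -
  have "inj J"
    by (metis assms(3) injI minus_equation_iff)
  have \<psi>: "\<psi> \<in> Sp \<omega>" "linear \<psi>" "inj (\<lambda>x. \<psi> x - x)"
    using assms(5) by (auto simp: Sp_psi_def Sp_def bij_is_inj)
  have \<Phi>: "\<Phi> \<in> Sp \<omega>" "linear \<Phi>" "bij (\<lambda>x. \<Phi> x - \<psi> x)"
    using assms(6) by (auto simp: Sp_psi_def Sp_def)
  show ?thesis
    using C_psi_symmetric[OF assms(1,4) \<Phi>(1) \<psi>(1) \<Phi>(3)]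
      C_psi_eq_0_iff[OF assms(2) \<open>inj J\<close> \<psi>(2,3) \<Phi>(2,3)]
    by blast
qed

end
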